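(* Let $\overline{D}$ be FG declarations and $\sigma_m$ a TL method substitution. Suppose $\overline{D}\vdash t<:u\leadsto E_1$, $\overline{D}\approx_k\sigma_m$, and $\models_k t: e\approx E_2$. Then $\models_k u: e\approx E_1\,E_2$.
   Context: Featherweight Go (FG). Field names $f$, method names $m$, variables $x$, structure type names $t_S,u_S$, interface type names $t_I,u_I$; types $t,u$ range over both kinds of names. A method signature is $M = (x_1\,t_1,\ldots,x_n\,t_n)\,t$; a method specification is $m M$. Expressions: $e ::= x \mid e.m(e_1,\ldots,e_n) \mid t_S\{e_1,\ldots,e_n\} \mid e.f \mid e.(t)$. Declarations: $\mathtt{type}\ t_S\ \mathtt{struct}\{f_1\,t_1 \ldots f_n\,t_n\}$, $\mathtt{type}\ t_I\ \mathtt{interface}\{S_1 \ldots S_q\}$ ($S_j$ method specifications, in this order), and method declarations $\mathtt{func}\ (x\ t_S)\ m M\ \{\mathtt{return}\ e\}$. It is assumed that structures are non-recursive, field names within a struct are distinct, method names within an interface are distinct, and each method declaration is uniquely identified by receiver type and method name. $\mathrm{methods}(\overline{D},t_S)=\{mM \mid \mathtt{func}\ (x\ t_S)\ mM\{\ldots\}\in\overline{D}\}$; $\mathrm{methods}(\overline{D},t_I)$ is the set of specifications of the declaration of $t_I$. Subtyping: $t_S <: t_S$, and $t <: u_I$ iff $\mathrm{methods}(\overline{D},t)\supseteq\mathrm{methods}(\overline{D},u_I)$. $\mathrm{methodLookup}(\overline{D},(m,t_S))$ is the unique declaration $\mathtt{func}\ (x\ t_S)\ mM\{\ldots\}\in\overline{D}$.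 FG values $v ::= t_S\{v_1,\ldots,v_n\}$. Reduction $\overline{D}\vdash d\longrightarrow e$ is closed under evaluation contexts $\mathcal{E} ::= [\,] \mid t_S\{\overline{v},\mathcal{E},\overline{e}\} \mid \mathcal{E}.f \mid \mathcal{E}.(t) \mid \mathcal{E}.m(\overline{e}) \mid v.m(\overline{v},\mathcal{E},\overline{e})$, with rules $t_S\{v_1..v_n\}.f_i \longrightarrow v_i$; $v.m(v_1..v_n)\longrightarrow [x\mapsto v, x_i\mapsto v_i]e$ if $v=t_S\{\ldots\}$ and $\mathtt{func}\ (x\ t_S)\ m(x_1\,t_1..x_n\,t_n)\,t\{\mathtt{return}\ e\}\in\overline{D}$; $v.(t)\longrightarrow v$ if $v=t_S\{\ldots\}$ and $t_S<:t$. $\overline{D}\vdash e\longrightarrow^{\le k} v$ means $e$ reduces to value $v$ in at most $k$ steps. Target language (TL): $E ::= X \mid K \mid E\,E \mid \lambda X.E \mid \mathtt{case}\ E\ \mathtt{of}\ [Pat_1\to E_1,\ldots]$, $Pat ::= K\,X_1\ldots X_n$, with tuple constructors $(E_1,\ldots,E_n)$. TL values $V ::= X \mid K\,V_1\ldots V_n$. Given a method substitution $\sigma_m$ (finite map from variables $Y$ to $\lambda$-abstractions), reduction $\sigma_m\vdash E\longrightarrow E'$ is closed under contexts $R ::= [\,]\mid K\,\overline{V}\,R\,\overline{E}\mid \mathtt{case}\ R\ \mathtt{of}\ [\ldots]\mid R\,E\mid V\,R$ with rules $(\lambda X.E)\,V\longrightarrow[X\mapsto V]E$; $\mathtt{case}\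 K\,V_1..V_n\ \mathtt{of}\ [\ldots]\longrightarrow[X_i\mapsto V_i]E'$ if $K\,X_1..X_n\to E'$ is a clause; $Y\,E\longrightarrow\sigma_m(Y)\,E$. $\sigma_m\vdash E\longrightarrow^{\le k}V$ analogously. Each struct $t_S$ has a TL constructor $K_{t_S}$, each interface $t_I$ a constructor $K_{t_I}$; the method declaration of $m$ for receiver $t_S$ has a TL variable $m_{t_S}$. Interface-value construction $\overline{D}\vdash t<:u_I\leadsto E$: if $\mathtt{type}\ t_I\ \mathtt{interface}\{m_1M_1..m_nM_n\}\in\overline{D}$ and $\mathrm{methods}(\overline{D},t_S)\supseteq\{m_iM_i\}$ then $\overline{D}\vdash t_S<:t_I\leadsto\lambda X.K_{t_I}(X,m_{1,t_S},\ldots,m_{n,t_S})$; if $\mathtt{type}\ t_I\ \mathtt{interface}\{R_1..R_n\}$, $\mathtt{type}\ u_I\ \mathtt{interface}\{S_1..S_q\}\in\overline{D}$ and $\pi:\{1..q\}\to\{1..n\}$ with $S_i=R_{\pi(i)}$, then $\overline{D}\vdash t_I<:u_I\leadsto\lambda X.\mathtt{case}\ X\ \mathtt{of}\ K_{t_I}(X,X_1,..,X_n)\to K_{u_I}(X,X_{\pi(1)},..,X_{\pi(q)})$. Step-indexed logical relation (relative to fixed $\overline{D}$ and $\sigma_m$), defined by the rules: (Exp) $\models_k t: e\approx E$ holds if for all $k_1<k$, $k_2<k$, FG values $v$ and TL values $V$ with $k-k_1-k_2>0$, $\overline{D}\vdash e\longrightarrow^{\le k_1}v$ and $\sigma_m\vdash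 E\longrightarrow^{\le k_2}V$, we have $\models_{k-k_1-k_2} t: v\approx V$. (Struct) $\models_k t_S: t_S\{v_1..v_n\}\approx K_{t_S}(V_1,..,V_n)$ holds if $\mathtt{type}\ t_S\ \mathtt{struct}\{f_1t_1..f_nt_n\}\in\overline{D}$ and $\models_k t_i: v_i\approx V_i$ for all $i$. (Iface) $\models_k t_I: v\approx K_{t_I}(V,V_1,..,V_n)$ holds if $V=K_{u_S}\,\overline{V'}$ for some struct $u_S$, $\models_{k_1}u_S: v\approx V$ for all $k_1<k$, $\mathrm{methods}(\overline{D},t_I)=\{m_1M_1,..,m_nM_n\}$ (in declaration order), and for all $k_2<k$ and $i$, $\models_{k_2} m_iM_i:\mathrm{methodLookup}(\overline{D},(m_i,u_S))\approx V_i$. (Method) $\models_k m(x_1t_1..x_nt_n)t:\mathtt{func}\ (x\ t_S)\ m(x_1t_1..x_nt_n)t\{\mathtt{return}\ e\}\approx V$ holds if for all $k'\le k$ and $v',V',v_i,V_i$ with $\models_{k'}t_S:v'\approx V'$ and $\models_{k'}t_i:v_i\approx V_i$ for all $i$, we have $\models_{k'}t:[x\mapsto v',x_i\mapsto v_i]e\approx(V\,V')\,(V_1,..,V_n)$. (Decls) $\overline{D}\approx_k\sigma_m$ iff for every $\mathtt{func}\ (x\ t_S)\ mM\{\mathtt{return}\ e\}\in\overline{D}$, $\models_k mM:\mathtt{func}\ (x\ t_S)\ mM\{\mathtt{return}\ e\}\approx m_{t_S}$ (the TL variable). *)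

theory Defs
  imports Main
begin

section \<open>Featherweight Go (FG)\<close>

type_synonym name = string
type_synonym vname = string
type_synonym fname = string
type_synonym mname = string

datatype ty = TS name | TI name

text \<open>Method signature (x1 t1, ..., xn tn) t and method specification m M.\<close>
type_synonym msig = "(vname \<times> ty) list \<times> ty"
type_synonym mspec = "mname \<times> msig"

datatype fexp =
    FVar vname
  | Call fexp mname "fexp list"
  | SLit name "fexp list"
  | Sel fexp fname
  | Assert fexp ty

text \<open>Declarations: type tS struct{...}, type tI interface{S1 ... Sq},
  and func (x tS) m M {return e}, represented as FuncD x tS m M e.\<close>
datatype decl =
    StructD name "(fname \<times> ty) list"
  | IfaceD name "mspec list"
  | FuncD vname name mname msig fexp

type_synonym decls = "decl list"

fun is_fval :: "fexp \<Rightarrow> bool" where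
  "is_fval (SLit t es) = list_all is_fval es"
| "is_fval _ = False"

definition methods :: "decls \<Rightarrow> ty \<Rightarrow> mspec set" where
  "methods D t = (case t of
      TS tS \<Rightarrow> {(m, M). \<exists>x e. FuncD x tS m M e \<in> set D}
    | TI tI \<Rightarrow> (\<Union>Ss \<in> {Ss. IfaceD tI Ss \<in> set D}. set Ss))"

fun subtype :: "decls \<Rightarrow> ty \<Rightarrow> ty \<Rightarrow> bool" where
  "subtype D (TS a) (TS b) = (a = b)"
| "subtype D t (TI u) = (methods D t \<supseteq> methods D (TI u))"
| "subtype D (TI a) (TS b) = False"

definition methodLookup :: "decls \<Rightarrow> mname \<Rightarrow> name \<Rightarrow> decl" where
  "methodLookup D m tS = (THE d. d \<in> set D \<and> (\<exists>x M e. d = FuncD x tS m M e))"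

text \<open>Standing assumptions on declarations.  Uniqueness of type declarations is
  implicit in the phrase ``the declaration of t''.\<close>
definition wf_decls :: "decls \<Rightarrow> bool" where
  "wf_decls D \<longleftrightarrow>
     acyclic {(u, t). \<exists>fts f. StructD t fts \<in> set D \<and> (f, TS u) \<in> set fts}
   \<and> (\<forall>t fts. StructD t fts \<in> set D \<longrightarrow> distinct (map fst fts))
   \<and> (\<forall>t Ss. IfaceD t Ss \<in> set D \<longrightarrow> distinct (map fst Ss))
   \<and> (\<forall>x x' t m M M' e e'. FuncD x t m M e \<in> set D \<longrightarrow> FuncD x' t m M' e' \<in> set D
        \<longrightarrow> x = x' \<and> M = M' \<and> e = e')
   \<and> (\<forall>t a b. StructD t a \<in> set D \<longrightarrow> StructD t b \<in> set D \<longrightarrow> a = b)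
   \<and> (\<forall>t a b. IfaceD t a \<in> set D \<longrightarrow> IfaceD t b \<in> set D \<longrightarrow> a = b)"

text \<open>Substitution (FG has no binders).\<close>
fun fsubst :: "(vname \<rightharpoonup> fexp) \<Rightarrow> fexp \<Rightarrow> fexp" where
  "fsubst s (FVar x) = (case s x of Some v \<Rightarrow> v | None \<Rightarrow> FVar x)"
| "fsubst s (Call e m es) = Call (fsubst s e) m (map (fsubst s) es)"
| "fsubst s (SLit t es) = SLit t (map (fsubst s) es)"
| "fsubst s (Sel e f) = Sel (fsubst s e) f"
| "fsubst s (Assert e t) = Assert (fsubst s e) t"

inductive fstep :: "decls \<Rightarrow> fexp \<Rightarrow> fexp \<Rightarrow> bool" for D where
  field: "\<lbrakk> is_fval (SLit tS vs); StructD tS fts \<in> set D; length vs = length fts;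
            i < length fts; fst (fts ! i) = f \<rbrakk>
          \<Longrightarrow> fstep D (Sel (SLit tS vs) f) (vs ! i)"
| call: "\<lbrakk> v = SLit tS ws; is_fval v; list_all is_fval vs;
           FuncD x tS m (ps, t) e \<in> set D; length vs = length ps \<rbrakk>
          \<Longrightarrow> fstep D (Call v m vs) (fsubst ((Map.empty(x \<mapsto> v))(map fst ps [\<mapsto>] vs)) e)"
| assert: "\<lbrakk> v = SLit tS ws; is_fval v; subtype D (TS tS) t \<rbrakk>
          \<Longrightarrow> fstep D (Assert v t) v"
| ctx_lit: "\<lbrakk> list_all is_fval vs; fstep D e e' \<rbrakk>
          \<Longrightarrow> fstep D (SLit t (vs @ e # es)) (SLit t (vs @ e' # es))"
| ctx_sel: "fstep D e e' \<Longrightarrow> fstep D (Sel e f) (Sel e' f)"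
| ctx_assert: "fstep D e e' \<Longrightarrow> fstep D (Assert e t) (Assert e' t)"
| ctx_recv: "fstep D e e' \<Longrightarrow> fstep D (Call e m es) (Call e' m es)"
| ctx_arg: "\<lbrakk> is_fval v; list_all is_fval vs; fstep D e e' \<rbrakk>
          \<Longrightarrow> fstep D (Call v m (vs @ e # es)) (Call v m (vs @ e' # es))"

definition fsteps_le :: "decls \<Rightarrow> nat \<Rightarrow> fexp \<Rightarrow> fexp \<Rightarrow> bool" where
  "fsteps_le D n e v \<longleftrightarrow> (\<exists>j\<le>n. (fstep D ^^ j) e v)"

section \<open>Target language (TL)\<close>

text \<open>TL variables: the method variables m_{tS} and ordinary variables.\<close>
datatype tvar = MethV name mname | OrdV string

text \<open>Constructors: K_{tS}, K_{tI}, and tuple constructors of each arity.\<close>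
datatype tcon = KS name | KI name | KTup nat

datatype texp =
    TVar tvar
  | TCon tcon
  | TApp texp texp
  | TLam tvar texp
  | TCase texp "(tcon \<times> tvar list \<times> texp) list"

definition capp :: "tcon \<Rightarrow> texp list \<Rightarrow> texp" where
  "capp K Es = foldl TApp (TCon K) Es"

definition tuple :: "texp list \<Rightarrow> texp" where
  "tuple Es = capp (KTup (length Es)) Es"

inductive is_tval :: "texp \<Rightarrow> bool" where
  var: "is_tval (TVar X)"
| con: "list_all is_tval Vs \<Longrightarrow> is_tval (capp K Vs)"
monos list.pred_mono_strong

fun tsubst :: "(tvar \<rightharpoonup> texp) \<Rightarrow> texp \<Rightarrow> texp" where
  "tsubst s (TVar X) = (case s X of Some V \<Rightarrow> V | None \<Rightarrow> TVar X)"
| "tsubst s (TCon K) = TCon K"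
| "tsubst s (TApp E1 E2) = TApp (tsubst s E1) (tsubst s E2)"
| "tsubst s (TLam X E) = TLam X (tsubst (s(X := None)) E)"
| "tsubst s (TCase E cls) =
     TCase (tsubst s E) (map (\<lambda>(K, Xs, B). (K, Xs, tsubst (s |` (- set Xs)) B)) cls)"

definition method_subst :: "(tvar \<rightharpoonup> texp) \<Rightarrow> bool" where
  "method_subst \<sigma> \<longleftrightarrow> finite (dom \<sigma>) \<and> (\<forall>Y E. \<sigma> Y = Some E \<longrightarrow> (\<exists>X B. E = TLam X B))"

inductive tstep :: "(tvar \<rightharpoonup> texp) \<Rightarrow> texp \<Rightarrow> texp \<Rightarrow> bool" for \<sigma> where
  beta: "is_tval V \<Longrightarrow> tstep \<sigma> (TApp (TLam X E) V) (tsubst (Map.empty(X \<mapsto> V)) E)"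
| case_red: "\<lbrakk> list_all is_tval Vs; (K, Xs, E') \<in> set cls; length Xs = length Vs \<rbrakk>
          \<Longrightarrow> tstep \<sigma> (TCase (capp K Vs) cls) (tsubst (Map.empty(Xs [\<mapsto>] Vs)) E')"
| meth: "\<sigma> Y = Some F \<Longrightarrow> tstep \<sigma> (TApp (TVar Y) E) (TApp F E)"
| ctx_fun: "tstep \<sigma> E E' \<Longrightarrow> tstep \<sigma> (TApp E E2) (TApp E' E2)"
| ctx_arg: "\<lbrakk> is_tval V; tstep \<sigma> E E' \<rbrakk> \<Longrightarrow> tstep \<sigma> (TApp V E) (TApp V E')"
| ctx_case: "tstep \<sigma> E E' \<Longrightarrow> tstep \<sigma> (TCase E cls) (TCase E' cls)"

definition tsteps_le :: "(tvar \<rightharpoonup> texp) \<Rightarrow> nat \<Rightarrow> texp \<Rightarrow> texp \<Rightarrow> bool" where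
  "tsteps_le \<sigma> n E V \<longleftrightarrow> (\<exists>j\<le>n. (tstep \<sigma> ^^ j) E V)"

section \<open>Interface-value construction  D |- t <: uI ~> E\<close>

inductive coerce :: "decls \<Rightarrow> ty \<Rightarrow> ty \<Rightarrow> texp \<Rightarrow> bool" for D where
  struct_iface:
    "\<lbrakk> IfaceD tI Ms \<in> set D; set Ms \<subseteq> methods D (TS tS) \<rbrakk>
     \<Longrightarrow> coerce D (TS tS) (TI tI)
           (TLam (OrdV X) (capp (KI tI) (TVar (OrdV X) # map (\<lambda>mM. TVar (MethV tS (fst mM))) Ms)))"
| iface_iface:
    "\<lbrakk> IfaceD tI Rs \<in> set D; IfaceD uI Ss \<in> set D;
       \<forall>i < length Ss. \<pi> i < length Rs \<and> Ss ! i = Rs ! (\<pi> i);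
       length Xs = length Rs; distinct (X # Xs) \<rbrakk>
     \<Longrightarrow> coerce D (TI tI) (TI uI)
           (TLam (OrdV X) (TCase (TVar (OrdV X))
              [(KI tI, OrdV X # map OrdV Xs,
                capp (KI uI) (TVar (OrdV X) # map (\<lambda>i. TVar (OrdV (Xs ! \<pi> i))) [0..<length Ss]))]))"

section \<open>Step-indexed logical relation\<close>

definition exp_gen :: "decls \<Rightarrow> (tvar \<rightharpoonup> texp) \<Rightarrow> (nat \<Rightarrow> ty \<Rightarrow> fexp \<Rightarrow> texp \<Rightarrow> bool)
                       \<Rightarrow> nat \<Rightarrow> ty \<Rightarrow> fexp \<Rightarrow> texp \<Rightarrow> bool" where
  "exp_gen D \<sigma> R k t e E \<longleftrightarrow>
     (\<forall>k1 k2 v V. k1 < k \<longrightarrow> k2 < k \<longrightarrow> k - k1 - k2 > 0 \<longrightarrow> is_fval v \<longrightarrow> is_tval V \<longrightarrow>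
        fsteps_le D k1 e v \<longrightarrow> tsteps_le \<sigma> k2 E V \<longrightarrow> R (k - k1 - k2) t v V)"

definition method_gen :: "decls \<Rightarrow> (tvar \<rightharpoonup> texp) \<Rightarrow> (nat \<Rightarrow> ty \<Rightarrow> fexp \<Rightarrow> texp \<Rightarrow> bool)
                          \<Rightarrow> nat \<Rightarrow> mspec \<Rightarrow> decl \<Rightarrow> texp \<Rightarrow> bool" where
  "method_gen D \<sigma> R k mM d V = (case d of
     FuncD x tS m M e \<Rightarrow> mM = (m, M) \<and>
       (\<forall>k' v' V' vs Vs. k' \<le> k \<longrightarrow> is_fval v' \<longrightarrow> is_tval V' \<longrightarrow>
          list_all is_fval vs \<longrightarrow> list_all is_tval Vs \<longrightarrow>
          length vs = length (fst M) \<longrightarrow> length Vs = length (fst M) \<longrightarrow>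
          R k' (TS tS) v' V' \<longrightarrow>
          (\<forall>i < length (fst M). R k' (snd (fst M ! i)) (vs ! i) (Vs ! i)) \<longrightarrow>
          exp_gen D \<sigma> R k' (snd M)
            (fsubst ((Map.empty(x \<mapsto> v'))(map fst (fst M) [\<mapsto>] vs)) e)
            (TApp (TApp V V') (tuple Vs)))
   | _ \<Rightarrow> False)"

text \<open>Value relation at level k, given the relations R j at the lower levels j < k.\<close>
inductive val_step :: "decls \<Rightarrow> (tvar \<rightharpoonup> texp) \<Rightarrow> nat \<Rightarrow> (nat \<Rightarrow> ty \<Rightarrow> fexp \<Rightarrow> texp \<Rightarrow> bool)
                       \<Rightarrow> ty \<Rightarrow> fexp \<Rightarrow> texp \<Rightarrow> bool"
  for D \<sigma> k R where
  Struct: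
    "\<lbrakk> StructD tS fts \<in> set D; length vs = length fts; length Vs = length fts;
       \<forall>i < length fts. val_step D \<sigma> k R (snd (fts ! i)) (vs ! i) (Vs ! i) \<rbrakk>
     \<Longrightarrow> val_step D \<sigma> k R (TS tS) (SLit tS vs) (capp (KS tS) Vs)"
| Iface:
    "\<lbrakk> V = capp (KS uS) V's;
       \<forall>k1 < k. R k1 (TS uS) v V;
       IfaceD tI Ms \<in> set D; length Vs = length Ms;
       \<forall>k2 < k. \<forall>i < length Ms.
          method_gen D \<sigma> R k2 (Ms ! i) (methodLookup D (fst (Ms ! i)) uS) (Vs ! i) \<rbrakk>
     \<Longrightarrow> val_step D \<sigma> k R (TI tI) v (capp (KI tI) (V # Vs))"

primrec vrels :: "decls \<Rightarrow> (tvar \<rightharpoonup> texp) \<Rightarrow> nat \<Rightarrow> nat \<Rightarrow> ty \<Rightarrow> fexp \<Rightarrow> texp \<Rightarrow> bool" where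
  "vrels D \<sigma> 0 = (\<lambda>j. val_step D \<sigma> 0 (\<lambda>_ _ _ _. False))"
| "vrels D \<sigma> (Suc n) = (\<lambda>j. if j \<le> n then vrels D \<sigma> n j else val_step D \<sigma> (Suc n) (vrels D \<sigma> n))"

definition val_rel :: "decls \<Rightarrow> (tvar \<rightharpoonup> texp) \<Rightarrow> nat \<Rightarrow> ty \<Rightarrow> fexp \<Rightarrow> texp \<Rightarrow> bool" where
  "val_rel D \<sigma> k = vrels D \<sigma> k k"

definition exp_rel :: "decls \<Rightarrow> (tvar \<rightharpoonup> texp) \<Rightarrow> nat \<Rightarrow> ty \<Rightarrow> fexp \<Rightarrow> texp \<Rightarrow> bool" where
  "exp_rel D \<sigma> k = exp_gen D \<sigma> (val_rel D \<sigma>) k"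

definition method_rel :: "decls \<Rightarrow> (tvar \<rightharpoonup> texp) \<Rightarrow> nat \<Rightarrow> mspec \<Rightarrow> decl \<Rightarrow> texp \<Rightarrow> bool" where
  "method_rel D \<sigma> k = method_gen D \<sigma> (val_rel D \<sigma>) k"

definition decls_rel :: "decls \<Rightarrow> nat \<Rightarrow> (tvar \<rightharpoonup> texp) \<Rightarrow> bool" where
  "decls_rel D k \<sigma> \<longleftrightarrow>
     (\<forall>x tS m M e. FuncD x tS m M e \<in> set D \<longrightarrow>
        method_rel D \<sigma> k (m, M) (FuncD x tS m M e) (TVar (MethV tS m)))"

end

theory Submission
  imports Defs
begin

text \<open>
  The coercion \<open>E1\<close> is a \<open>\<lambda>\<close>-abstraction. Abstractions are not TL values and \<open>(\<lambda>X. B) R\<close>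
  is not an evaluation context, so \<open>E1 E2\<close> can reach a value only if \<open>E2\<close> is already a value;
  \<open>E2\<close> is then related to every FG value of \<open>e\<close> at the remaining index. The \<open>\<beta>\<close>-step
  (followed, for an interface-to-interface coercion, by one \<open>case\<close>-step) produces an
  interface value whose method entries are either the method variables \<open>m\<^sub>t\<^sub>S\<close>, related
  to their declarations by \<open>D \<approx>\<^sub>k \<sigma>\<close>, or a selection of the entries of the source interface
  value, related by hypothesis. Downward closure of the relations in the step index absorbs
  the steps spent.
\<close>

section \<open>Step indexing\<close>

lemma exp_gen_cong:
  assumes "\<forall>j\<le>k. R' j = R j"
  shows "exp_gen D \<sigma> R' k t e E = exp_gen D \<sigma> R k t e E"
  unfolding exp_gen_def using assms by (auto simp: diff_le_self)

lemma method_gen_cong: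
  assumes "\<forall>j\<le>k. R' j = R j"
  shows "method_gen D \<sigma> R' k mM d V = method_gen D \<sigma> R k mM d V"
proof -
  have "exp_gen D \<sigma> R' k' = exp_gen D \<sigma> R k'" "R' k' = R k'" if "k' \<le> k" for k'
    using assms that by (auto intro!: ext exp_gen_cong)
  then show ?thesis
    unfolding method_gen_def by (cases d) simp_all
qed

lemma method_gen_downward_closed:
  "method_gen D \<sigma> R k mM d V \<Longrightarrow> k' \<le> k \<Longrightarrow> method_gen D \<sigma> R k' mM d V"
  unfolding method_gen_def by (cases d) auto

lemma val_step_cong_downward:
  assumes "val_step D \<sigma> n R t v V" "m \<le> n" "\<forall>j<m. R' j = R j"
  shows "val_step D \<sigma> m R' t v V"
  using assms
proof (induction rule: val_step.induct)
  case (Struct tS fts vs Vs)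
  then show ?case by (auto intro!: val_step.Struct)
next
  case (Iface V uS V's v tI Ms Vs)
  have "method_gen D \<sigma> R' k2 (Ms ! i) (methodLookup D (fst (Ms ! i)) uS) (Vs ! i)"
    if "k2 < m" "i < length Ms" for k2 i
    using Iface that method_gen_cong[of k2 R' R] by auto
  with Iface show ?case by (auto intro!: val_step.Iface)
qed

lemma vrels_eq_val_rel: "j \<le> n \<Longrightarrow> vrels D \<sigma> n j = val_rel D \<sigma> j"
proof (induction n arbitrary: j)
  case 0
  then show ?case by (simp add: val_rel_def)
next
  case (Suc n)
  then show ?case by (cases "j \<le> n") (simp_all add: val_rel_def le_Suc_eq)
qed

lemma val_rel_unfold: "val_rel D \<sigma> n t v V = val_step D \<sigma> n (val_rel D \<sigma>) t v V"
proof (cases n)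
  case 0
  then show ?thesis
    unfolding val_rel_def by (auto elim: val_step_cong_downward)
next
  case (Suc n')
  then have "\<forall>j<n. vrels D \<sigma> n' j = val_rel D \<sigma> j"
    using vrels_eq_val_rel by auto
  with Suc show ?thesis
    by (auto simp: val_rel_def elim: val_step_cong_downward)
qed

lemma val_rel_downward_closed:
  "val_rel D \<sigma> n t v V \<Longrightarrow> m \<le> n \<Longrightarrow> val_rel D \<sigma> m t v V"
  unfolding val_rel_unfold[of D \<sigma> n] val_rel_unfold[of D \<sigma> m]
  by (auto elim: val_step_cong_downward)

lemma val_rel_TS_elim:
  assumes "val_rel D \<sigma> n (TS tS) v V"
  obtains Vs where "V = capp (KS tS) Vs"
  using assms[unfolded val_rel_unfold[of D \<sigma> n]] by (cases rule: val_step.cases) auto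

lemma val_rel_TI_elim:
  assumes "val_rel D \<sigma> n (TI tI) v W"
  obtains V Vs uS V's Ms where "W = capp (KI tI) (V # Vs)" "V = capp (KS uS) V's"
    "\<forall>k1<n. val_rel D \<sigma> k1 (TS uS) v V" "IfaceD tI Ms \<in> set D" "length Vs = length Ms"
    "\<forall>k2<n. \<forall>i<length Ms.
       method_rel D \<sigma> k2 (Ms ! i) (methodLookup D (fst (Ms ! i)) uS) (Vs ! i)"
  using assms[unfolded val_rel_unfold[of D \<sigma> n]]
proof (cases rule: val_step.cases)
  case (Iface V uS V's Ms Vs)
  with that show thesis
    unfolding method_rel_def by blast
qed

lemma exp_rel_value_target:
  assumes "exp_rel D \<sigma> k t e V" "is_tval V"
    and "k1 < k" "fsteps_le D k1 e v" "is_fval v"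
  shows "val_rel D \<sigma> (k - k1) t v V"
proof -
  have "tsteps_le \<sigma> 0 V V"
    by (simp add: tsteps_le_def)
  with assms have "val_rel D \<sigma> (k - k1 - 0) t v V"
    unfolding exp_rel_def exp_gen_def
    by (elim allE[of _ k1] allE[of _ 0] allE[of _ v] allE[of _ V]) simp
  then show ?thesis
    by simp
qed

section \<open>Declarations\<close>

lemma wf_decls_FuncD_unique:
  assumes "wf_decls D" "FuncD x t m M e \<in> set D" "FuncD x' t m M' e' \<in> set D"
  shows "FuncD x' t m M' e' = FuncD x t m M e"
proof -
  have "\<forall>x x' t m M M' e e'. FuncD x t m M e \<in> set D \<longrightarrow> FuncD x' t m M' e' \<in> set D
      \<longrightarrow> x = x' \<and> M = M' \<and> e = e'"
    using assms(1) unfolding wf_decls_def by (elim conjE)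
  with assms(2,3) show ?thesis
    by blast
qed

lemma wf_decls_IfaceD_unique:
  assumes "wf_decls D" "IfaceD t Ms \<in> set D" "IfaceD t Ms' \<in> set D"
  shows "Ms' = Ms"
proof -
  have "\<forall>t a b. IfaceD t a \<in> set D \<longrightarrow> IfaceD t b \<in> set D \<longrightarrow> a = b"
    using assms(1) unfolding wf_decls_def by (elim conjE)
  with assms(2,3) show ?thesis
    by blast
qed

lemma methodLookup_eq:
  assumes "wf_decls D" "FuncD x tS m M e \<in> set D"
  shows "methodLookup D m tS = FuncD x tS m M e"
  unfolding methodLookup_def
proof (rule the_equality)
  fix d
  assume "d \<in> set D \<and> (\<exists>x M e. d = FuncD x tS m M e)"
  then show "d = FuncD x tS m M e"
    using wf_decls_FuncD_unique[OF assms] by blast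
qed (use assms(2) in blast)

lemma decls_rel_method_rel:
  assumes "wf_decls D" "decls_rel D k \<sigma>" "mM \<in> methods D (TS tS)" "k' \<le> k"
  shows "method_rel D \<sigma> k' mM (methodLookup D (fst mM) tS) (TVar (MethV tS (fst mM)))"
proof -
  obtain m M x e where mM: "mM = (m, M)" and f: "FuncD x tS m M e \<in> set D"
    using assms(3) by (auto simp: methods_def)
  with assms(2) have "method_rel D \<sigma> k mM (FuncD x tS m M e) (TVar (MethV tS m))"
    unfolding decls_rel_def by blast
  with assms(4) show ?thesis
    unfolding method_rel_def mM fst_conv methodLookup_eq[OF assms(1) f]
    by (auto intro: method_gen_downward_closed)
qed

section \<open>Target-language reduction\<close>

lemma map_upds_nth:
  "distinct ks \<Longrightarrow> length ks = length vs \<Longrightarrow> i < length ks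
    \<Longrightarrow> (m(ks [\<mapsto>] vs)) (ks ! i) = Some (vs ! i)"
proof (induction ks arbitrary: vs m i)
  case (Cons k ks)
  then obtain v vs' where "vs = v # vs'"
    by (cases vs) auto
  with Cons show ?case
    by (cases i) (auto simp: nth_mem)
qed simp

lemma capp_Nil [simp]: "capp K [] = TCon K"
  by (simp add: capp_def)

lemma capp_snoc [simp]: "capp K (Vs @ [W]) = TApp (capp K Vs) W"
  by (simp add: capp_def)

lemma capp_neq [simp]:
  "capp K Vs \<noteq> TLam X B" "capp K Vs \<noteq> TVar X" "capp K Vs \<noteq> TCase E cls"
  "TLam X B \<noteq> capp K Vs" "TVar X \<noteq> capp K Vs" "TCase E cls \<noteq> capp K Vs"
  by (cases Vs rule: rev_cases; simp)+

lemma capp_inject: "capp K Vs = capp K' Vs' \<longleftrightarrow> K = K' \<and> Vs = Vs'"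
proof (induction Vs arbitrary: Vs' rule: rev_induct)
  case Nil
  then show ?case by (cases Vs' rule: rev_cases) auto
next
  case (snoc x xs)
  then show ?case by (cases Vs' rule: rev_cases) auto
qed

lemma capp_eq_TApp_iff:
  "capp K Vs = TApp A B \<longleftrightarrow> Vs \<noteq> [] \<and> A = capp K (butlast Vs) \<and> B = last Vs"
  by (cases Vs rule: rev_cases) auto

lemma tsubst_capp: "tsubst s (capp K Es) = capp K (map (tsubst s) Es)"
  by (induction Es rule: rev_induct) simp_all

lemma tsubst_empty: "tsubst Map.empty E = E"
proof (induction E)
  case (TCase E cls)
  then show ?case by (auto intro!: map_idI)
qed simp_all

lemma is_tval_capp_iff: "is_tval (capp K Vs) \<longleftrightarrow> list_all is_tval Vs"
proof
  assume "is_tval (capp K Vs)"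
  then show "list_all is_tval Vs"
    by cases (auto simp: capp_inject)
qed (rule is_tval.con)

lemma not_is_tval_TLam: "\<not> is_tval (TLam X B)"
  by (auto elim: is_tval.cases)

lemma capp_step_free:
  assumes "\<forall>V\<in>set Vs. \<forall>W. \<not> tstep \<sigma> V W"
  shows "\<not> tstep \<sigma> (capp K Vs) W"
  using assms
proof (induction Vs arbitrary: W rule: rev_induct)
  case Nil
  then show ?case by (auto elim: tstep.cases)
next
  case (snoc V Vs)
  then show ?case by (auto elim: tstep.cases)
qed

lemma tval_step_free: "is_tval V \<Longrightarrow> \<not> tstep \<sigma> V W"
proof (induction V arbitrary: W rule: is_tval.induct)
  case (var X)
  then show ?case by (auto elim: tstep.cases)
next
  case (con Vs K)
  then show ?case by (intro capp_step_free) (auto simp: list_all_iff)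
qed

lemma tval_steps_eq: "is_tval V \<Longrightarrow> (tstep \<sigma> ^^ j) V W \<Longrightarrow> W = V"
  by (erule relpowp_E2) (auto dest: tval_step_free)

lemma TLam_app_steps_to_tval:
  assumes "(tstep \<sigma> ^^ j) (TApp (TLam X B) E) V" "is_tval V"
  obtains j' where "is_tval E" "(tstep \<sigma> ^^ j') (tsubst (Map.empty(X \<mapsto> E)) B) V"
  using assms(1)
proof (rule relpowp_E2)
  assume "TApp (TLam X B) E = V"
  with assms(2) show thesis
    by (auto elim!: is_tval.cases simp: eq_commute[of "TApp _ _"] capp_eq_TApp_iff)
next
  fix E' j'
  assume "j = Suc j'" "tstep \<sigma> (TApp (TLam X B) E) E'" "(tstep \<sigma> ^^ j') E' V"
  moreover from \<open>tstep \<sigma> (TApp (TLam X B) E) E'\<close>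
  have "is_tval E \<and> E' = tsubst (Map.empty(X \<mapsto> E)) B"
    by cases (auto elim: tstep.cases simp: not_is_tval_TLam)
  ultimately show thesis using that by blast
qed

lemma TCase_capp_steps_to_tval:
  assumes "(tstep \<sigma> ^^ j) (TCase (capp K Vs) cls) V" "is_tval V" "list_all is_tval Vs"
  obtains j' Xs B where "(K, Xs, B) \<in> set cls" "length Xs = length Vs"
    "(tstep \<sigma> ^^ j') (tsubst (Map.empty(Xs [\<mapsto>] Vs)) B) V"
  using assms(1)
proof (rule relpowp_E2)
  assume "TCase (capp K Vs) cls = V"
  with assms(2) show thesis
    by (auto elim: is_tval.cases)
next
  fix E' j'
  assume "j = Suc j'" "tstep \<sigma> (TCase (capp K Vs) cls) E'" "(tstep \<sigma> ^^ j') E' V"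
  moreover from \<open>tstep \<sigma> (TCase (capp K Vs) cls) E'\<close>
  obtain Xs B where "(K, Xs, B) \<in> set cls" "length Xs = length Vs"
    "E' = tsubst (Map.empty(Xs [\<mapsto>] Vs)) B"
    by cases (auto simp: capp_inject tval_step_free[OF is_tval.con[OF assms(3)]])
  ultimately show thesis using that by blast
qed

lemma coerce_app_steps_arg_tval:
  "coerce D t u E1 \<Longrightarrow> (tstep \<sigma> ^^ j) (TApp E1 E) V \<Longrightarrow> is_tval V \<Longrightarrow> is_tval E"
  by (auto elim!: coerce.cases TLam_app_steps_to_tval)

lemma coerce_struct_iface_steps:
  assumes "coerce D (TS tS) (TI tI) E1" "(tstep \<sigma> ^^ j) (TApp E1 W) V" "is_tval V"
  obtains Ms where "IfaceD tI Ms \<in> set D" "set Ms \<subseteq> methods D (TS tS)"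
    "V = capp (KI tI) (W # map (\<lambda>mM. TVar (MethV tS (fst mM))) Ms)"
  using assms(1)
proof cases
  case (struct_iface Ms X)
  let ?V = "capp (KI tI) (W # map (\<lambda>mM. TVar (MethV tS (fst mM))) Ms)"
  from assms(2,3) obtain j' where "is_tval W" "(tstep \<sigma> ^^ j') ?V V"
    unfolding struct_iface by (auto simp: tsubst_capp comp_def elim: TLam_app_steps_to_tval)
  moreover have "is_tval ?V"
    using \<open>is_tval W\<close> by (simp add: is_tval_capp_iff list_all_iff is_tval.var)
  ultimately have "V = ?V"
    using tval_steps_eq by blast
  with struct_iface that show thesis by blast
qed

lemma coerce_iface_iface_steps:
  assumes "wf_decls D" "coerce D (TI tI) (TI uI) E1"
    and "IfaceD tI Rs \<in> set D" "length Ws = length Rs" "list_all is_tval (W # Ws)"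
    and "(tstep \<sigma> ^^ j) (TApp E1 (capp (KI tI) (W # Ws))) V" "is_tval V"
  obtains Ss \<pi> where "IfaceD uI Ss \<in> set D" "\<forall>i < length Ss. \<pi> i < length Rs \<and> Ss ! i = Rs ! \<pi> i"
    "V = capp (KI uI) (W # map (\<lambda>i. Ws ! \<pi> i) [0..<length Ss])"
  using assms(2)
proof cases
  case (iface_iface Rs' Ss \<pi> Xs X)
  have "Rs' = Rs"
    using wf_decls_IfaceD_unique assms(1,3) iface_iface(2) by metis
  define B where
    "B = capp (KI uI) (TVar (OrdV X) # map (\<lambda>i. TVar (OrdV (Xs ! \<pi> i))) [0..<length Ss])"
  define s where "s = Map.empty(OrdV X # map OrdV Xs [\<mapsto>] W # Ws)"
  let ?V = "capp (KI uI) (W # map (\<lambda>i. Ws ! \<pi> i) [0..<length Ss])"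
  have lengths: "length (OrdV X # map OrdV Xs) = length (W # Ws)" "length Xs = length Ws"
    using iface_iface \<open>Rs' = Rs\<close> assms(4) by simp_all
  have distinct: "distinct (OrdV X # map OrdV Xs)"
    using iface_iface by (auto simp: distinct_map inj_on_def)
  have "tsubst s (TVar (OrdV X)) = W"
    using map_upds_nth[OF distinct lengths(1), of 0] by (simp add: s_def)
  moreover have "map (tsubst s \<circ> (\<lambda>i. TVar (OrdV (Xs ! \<pi> i)))) [0..<length Ss]
      = map (\<lambda>i. Ws ! \<pi> i) [0..<length Ss]"
  proof (rule map_cong)
    fix i
    assume "i \<in> set [0..<length Ss]"
    then show "(tsubst s \<circ> (\<lambda>i. TVar (OrdV (Xs ! \<pi> i)))) i = Ws ! \<pi> i"
      using map_upds_nth[OF distinct lengths(1), of "Suc (\<pi> i)"] iface_iface lengths(2)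
      by (simp add: s_def)
  qed simp
  ultimately have reduct: "tsubst s B = ?V"
    unfolding B_def tsubst_capp list.map map_map by argo
  obtain j' where "(tstep \<sigma> ^^ j') (TCase (capp (KI tI) (W # Ws)) [(KI tI, OrdV X # map OrdV Xs, B)]) V"
    using assms(6,7) unfolding iface_iface B_def
    by (auto simp: tsubst_empty elim: TLam_app_steps_to_tval)
  then obtain j'' where "(tstep \<sigma> ^^ j'') ?V V"
    using assms(5,7) unfolding reduct[symmetric] s_def
    by (auto elim: TCase_capp_steps_to_tval)
  moreover have "is_tval ?V"
    using assms(5) iface_iface lengths(2) by (auto simp: is_tval_capp_iff list_all_iff)
  ultimately have "V = ?V"
    using tval_steps_eq by blast
  with iface_iface \<open>Rs' = Rs\<close> that show thesis by blast
qed

section \<open>Coercions preserve the logical relation\<close>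

lemma struct_iface_val_rel:
  assumes "wf_decls D" "decls_rel D k \<sigma>" "IfaceD tI Ms \<in> set D" "set Ms \<subseteq> methods D (TS tS)"
    and "val_rel D \<sigma> n (TS tS) v W" "m \<le> n" "m \<le> k"
  shows "val_rel D \<sigma> m (TI tI) v (capp (KI tI) (W # map (\<lambda>mM. TVar (MethV tS (fst mM))) Ms))"
proof -
  obtain Vs where "W = capp (KS tS) Vs"
    using assms(5) by (rule val_rel_TS_elim)
  moreover have "\<forall>k1<m. val_rel D \<sigma> k1 (TS tS) v W"
    using assms(5,6) val_rel_downward_closed by auto
  moreover have "\<forall>k2<m. \<forall>i<length Ms. method_gen D \<sigma> (val_rel D \<sigma>) k2 (Ms ! i)
      (methodLookup D (fst (Ms ! i)) tS) (map (\<lambda>mM. TVar (MethV tS (fst mM))) Ms ! i)"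
    using decls_rel_method_rel[OF assms(1,2)] assms(4,7) unfolding method_rel_def
    by (auto simp: nth_mem subsetD)
  ultimately show ?thesis
    unfolding val_rel_unfold[of D \<sigma> m] using assms(3) by (auto intro!: val_step.Iface)
qed

lemma iface_iface_val_rel:
  assumes "wf_decls D" "IfaceD tI Rs \<in> set D" "IfaceD uI Ss \<in> set D"
    and "\<forall>i < length Ss. \<pi> i < length Rs \<and> Ss ! i = Rs ! \<pi> i"
    and "val_rel D \<sigma> n (TI tI) v (capp (KI tI) (W # Ws))" "m \<le> n"
  shows "val_rel D \<sigma> m (TI uI) v (capp (KI uI) (W # map (\<lambda>i. Ws ! \<pi> i) [0..<length Ss]))"
  using assms(5)
proof (rule val_rel_TI_elim)
  fix W' Ws' uS V's Ms
  assume "capp (KI tI) (W # Ws) = capp (KI tI) (W' # Ws')" "W' = capp (KS uS) V's"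
    and "\<forall>k1<n. val_rel D \<sigma> k1 (TS uS) v W'" "IfaceD tI Ms \<in> set D" "length Ws' = length Ms"
    and "\<forall>k2<n. \<forall>i<length Ms.
       method_rel D \<sigma> k2 (Ms ! i) (methodLookup D (fst (Ms ! i)) uS) (Ws' ! i)"
  moreover from this have "W' = W" "Ws' = Ws" "Ms = Rs"
    using wf_decls_IfaceD_unique assms(1,2) by (auto simp: capp_inject)
  ultimately show ?thesis
    unfolding val_rel_unfold[of D \<sigma> m] method_rel_def
    using assms(3,4,6) by (auto intro!: val_step.Iface)
qed

lemma coerce_val_rel:
  assumes "wf_decls D" "decls_rel D k \<sigma>" "coerce D t u E1"
    and "val_rel D \<sigma> n t v W" "is_tval W" "(tstep \<sigma> ^^ j) (TApp E1 W) V" "is_tval V"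
    and "m \<le> n" "m \<le> k"
  shows "val_rel D \<sigma> m u v V"
  using assms(3)
proof cases
  case (struct_iface tI Ms tS X)
  with assms(3,6,7) obtain Ms where "IfaceD tI Ms \<in> set D" "set Ms \<subseteq> methods D (TS tS)"
    "V = capp (KI tI) (W # map (\<lambda>mM. TVar (MethV tS (fst mM))) Ms)"
    by (auto elim: coerce_struct_iface_steps)
  with struct_iface assms show ?thesis
    by (auto intro: struct_iface_val_rel)
next
  case (iface_iface tI Rs uI Ss \<pi> Xs X)
  from assms(4) obtain W0 Ws Rs' where W: "W = capp (KI tI) (W0 # Ws)"
    and Rs': "IfaceD tI Rs' \<in> set D" "length Ws = length Rs'"
    unfolding iface_iface by (auto elim: val_rel_TI_elim)
  have "list_all is_tval (W0 # Ws)"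
    using assms(5) W by (simp add: is_tval_capp_iff)
  obtain Ss' \<pi>' where "IfaceD uI Ss' \<in> set D"
    "\<forall>i < length Ss'. \<pi>' i < length Rs' \<and> Ss' ! i = Rs' ! \<pi>' i"
    "V = capp (KI uI) (W0 # map (\<lambda>i. Ws ! \<pi>' i) [0..<length Ss'])"
    by (rule coerce_iface_iface_steps[OF assms(1) assms(3)[unfolded iface_iface(1,2)] Rs'
          \<open>list_all is_tval (W0 # Ws)\<close> assms(6)[unfolded W] assms(7)])
  with iface_iface assms(1,4,8) Rs'(1) W show ?thesis
    by (auto intro: iface_iface_val_rel)
qed

theorem lemma2:
  assumes "wf_decls D"
    and "method_subst \<sigma>"
    and "coerce D t u E1"
    and "decls_rel D k \<sigma>"
    and "exp_rel D \<sigma> k t e E2"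
  shows "exp_rel D \<sigma> k u e (TApp E1 E2)"
  unfolding exp_rel_def exp_gen_def
proof (intro allI impI)
  fix k1 k2 v V
  assume "k1 < k" "k2 < k" "k - k1 - k2 > 0" "is_fval v" "is_tval V"
    and "fsteps_le D k1 e v" "tsteps_le \<sigma> k2 (TApp E1 E2) V"
  then obtain j where steps: "(tstep \<sigma> ^^ j) (TApp E1 E2) V"
    unfolding tsteps_le_def by blast
  with assms(3) \<open>is_tval V\<close> have "is_tval E2"
    by (blast intro: coerce_app_steps_arg_tval)
  with assms(5) \<open>k1 < k\<close> \<open>fsteps_le D k1 e v\<close> \<open>is_fval v\<close>
  have "val_rel D \<sigma> (k - k1) t v E2"
    by (intro exp_rel_value_target)
  from coerce_val_rel[OF assms(1,4,3) this \<open>is_tval E2\<close> steps \<open>is_tval V\<close>]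
  show "val_rel D \<sigma> (k - k1 - k2) u v V"
    by simp
qed

end
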